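(* Let $(\mathfrak J=\mathcal U\oplus\mathcal V,B)$ be a Jordan-Manin algebra with $\mathfrak J\neq\{0\}$. If $\mathfrak J$ is nilpotent, then $\mathcal U\cap\mathrm{Ann}(\mathfrak J)\neq\{0\}$ and $\mathcal V\cap\mathrm{Ann}(\mathfrak J)\neq\{0\}$.
   Context: All algebras are finite-dimensional over a field of characteristic zero. A Jordan algebra is a commutative algebra with $x(yx^2)=(xy)x^2$; $(\mathfrak J,B)$ is pseudo-euclidean if $B$ is nondegenerate symmetric with $B(xy,z)=B(x,yz)$. A Jordan-Manin algebra is a pseudo-euclidean Jordan algebra $(\mathfrak J,B)$ with $\mathfrak J=\mathcal U\oplus\mathcal V$ (vector space direct sum) for two subalgebras $\mathcal U,\mathcal V$ totally isotropic for $B$. $\mathrm{Ann}(\mathfrak J)=\{x:x\mathfrak J=0\}$. *)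

theory Defs
  imports Complex_Main
begin

text \<open>A finite-dimensional algebra over a field 'k (characteristic zero is imposed by the
  type class of 'k in the theorem), whose underlying vector space is the whole type 'v,
  with scalar multiplication scale and bilinear product mult.\<close>

definition fd_algebra ::
  "('k::field \<Rightarrow> 'v::ab_group_add \<Rightarrow> 'v) \<Rightarrow> ('v \<Rightarrow> 'v \<Rightarrow> 'v) \<Rightarrow> bool" where
  "fd_algebra scale mult \<longleftrightarrow>
     vector_space scale \<and>
     (\<exists>basis. finite_dimensional_vector_space scale basis) \<and>
     (\<forall>x y z. mult (x + y) z = mult x z + mult y z) \<and>
     (\<forall>x y z. mult x (y + z) = mult x y + mult x z) \<and>
     (\<forall>c x y. mult (scale c x) y = scale c (mult x y)) \<and>
     (\<forall>c x y. mult x (scale c y) = scale c (mult x y))"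

definition jordan_algebra ::
  "('k::field \<Rightarrow> 'v::ab_group_add \<Rightarrow> 'v) \<Rightarrow> ('v \<Rightarrow> 'v \<Rightarrow> 'v) \<Rightarrow> bool" where
  "jordan_algebra scale mult \<longleftrightarrow>
     fd_algebra scale mult \<and>
     (\<forall>x y. mult x y = mult y x) \<and>
     (\<forall>x y. mult x (mult y (mult x x)) = mult (mult x y) (mult x x))"

definition pseudo_euclidean ::
  "('k::field \<Rightarrow> 'v::ab_group_add \<Rightarrow> 'v) \<Rightarrow> ('v \<Rightarrow> 'v \<Rightarrow> 'v) \<Rightarrow> ('v \<Rightarrow> 'v \<Rightarrow> 'k) \<Rightarrow> bool" where
  "pseudo_euclidean scale mult B \<longleftrightarrow>
     jordan_algebra scale mult \<and>
     (\<forall>x y z. B (x + y) z = B x z + B y z) \<and>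
     (\<forall>c x y. B (scale c x) y = c * B x y) \<and>
     (\<forall>x y. B x y = B y x) \<and>
     (\<forall>x. (\<forall>y. B x y = 0) \<longrightarrow> x = 0) \<and>
     (\<forall>x y z. B (mult x y) z = B x (mult y z))"

definition subalgebra ::
  "('k::field \<Rightarrow> 'v::ab_group_add \<Rightarrow> 'v) \<Rightarrow> ('v \<Rightarrow> 'v \<Rightarrow> 'v) \<Rightarrow> 'v set \<Rightarrow> bool" where
  "subalgebra scale mult U \<longleftrightarrow>
     module.subspace scale U \<and> (\<forall>x\<in>U. \<forall>y\<in>U. mult x y \<in> U)"

definition totally_isotropic :: "('v \<Rightarrow> 'v \<Rightarrow> 'k::zero) \<Rightarrow> 'v set \<Rightarrow> bool" where
  "totally_isotropic B U \<longleftrightarrow> (\<forall>x\<in>U. \<forall>y\<in>U. B x y = 0)"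

definition direct_sum_decomp :: "'v::ab_group_add set \<Rightarrow> 'v set \<Rightarrow> bool" where
  "direct_sum_decomp U V \<longleftrightarrow> U \<inter> V = {0} \<and> (\<forall>x. \<exists>u\<in>U. \<exists>v\<in>V. x = u + v)"

definition jordan_manin ::
  "('k::field \<Rightarrow> 'v::ab_group_add \<Rightarrow> 'v) \<Rightarrow> ('v \<Rightarrow> 'v \<Rightarrow> 'v) \<Rightarrow> ('v \<Rightarrow> 'v \<Rightarrow> 'k)
     \<Rightarrow> 'v set \<Rightarrow> 'v set \<Rightarrow> bool" where
  "jordan_manin scale mult B U V \<longleftrightarrow>
     pseudo_euclidean scale mult B \<and>
     subalgebra scale mult U \<and> subalgebra scale mult V \<and>
     totally_isotropic B U \<and> totally_isotropic B V \<and>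
     direct_sum_decomp U V"

text \<open>Products of n elements of the algebra, in any bracketing (the spanning set of J^n).\<close>
inductive product_of_degree :: "('v \<Rightarrow> 'v \<Rightarrow> 'v) \<Rightarrow> nat \<Rightarrow> 'v \<Rightarrow> bool"
  for mult where
  single: "product_of_degree mult 1 x"
| prod: "product_of_degree mult i x \<Longrightarrow> product_of_degree mult j y \<Longrightarrow>
         product_of_degree mult (i + j) (mult x y)"

text \<open>Nilpotent: J^n = 0 for some n, i.e. every product of n elements (any bracketing) vanishes.\<close>
definition nilpotent_alg :: "('v::zero \<Rightarrow> 'v \<Rightarrow> 'v) \<Rightarrow> bool" where
  "nilpotent_alg mult \<longleftrightarrow> (\<exists>n\<ge>1. \<forall>x. product_of_degree mult n x \<longrightarrow> x = 0)"

definition Ann :: "('v::zero \<Rightarrow> 'v \<Rightarrow> 'v) \<Rightarrow> 'v set" where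
  "Ann mult = {x. \<forall>y. mult x y = 0}"

end

theory Submission
  imports Defs "HOL-Library.Set_Algebras"
begin

text \<open>Let \<open>W = U + J\<^sup>2\<close>. If \<open>W = J\<close>, then \<open>U + J\<^sup>k = J\<close> for every \<open>k\<close>, since each product
  \<open>(u + s)(u' + t)\<close> with \<open>s, t \<in> J\<^sup>k\<close> lies in \<open>U + J\<^sup>k\<^sup>+\<^sup>1\<close>; nilpotency then forces \<open>U = J\<close>,
  which is impossible for a nonzero totally isotropic subspace of a nondegenerate space. Hence
  \<open>W\<close> is proper and has a nonzero orthogonal vector \<open>x\<close>. Being orthogonal to \<open>U\<close>, and \<open>U\<close>, \<open>V\<close>
  being isotropic with \<open>J = U \<oplus> V\<close>, \<open>x\<close> lies in \<open>U\<close>; being orthogonal to \<open>J\<^sup>2\<close>, invariance gives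
  \<open>B(xy, z) = B(x, yz) = 0\<close>, so \<open>x \<in> Ann(J)\<close>. Exchanging \<open>U\<close> and \<open>V\<close> gives the other half.\<close>

lemma (in vector_space) subspace_set_plus:
  assumes "subspace S" "subspace T"
  shows "subspace (S + T)"
proof -
  have "S + T = {x + y |x y. x \<in> S \<and> y \<in> T}" by (auto simp: set_plus_def)
  with assms show ?thesis by (simp add: subspace_sums)
qed

context finite_dimensional_vector_space
begin

lemma dim_le_Suc_dim_kernel:
  fixes f :: "'b \<Rightarrow> 'a"
  assumes add: "\<And>x y. f (x + y) = f x + f y"
    and scale: "\<And>c x. f (c *s x) = c * f x"
    and S: "subspace S"
  shows "dim S \<le> dim {x\<in>S. f x = 0} + 1"
proof (cases "\<forall>x\<in>S. f x = 0")
  case True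
  then have "{x\<in>S. f x = 0} = S" by auto
  then show ?thesis by simp
next
  case False
  then obtain s0 where s0: "s0 \<in> S" "f s0 \<noteq> 0" by auto
  have f_diff: "f (x - y) = f x - f y" for x y
    using add[of "x - y" y] by (simp add: algebra_simps)
  let ?K = "{x\<in>S. f x = 0}"
  have "S \<subseteq> span (insert s0 ?K)"
  proof
    fix x assume x: "x \<in> S"
    define c where "c = f x / f s0"
    have "x - c *s s0 \<in> ?K"
      using x s0 S by (auto simp: f_diff scale c_def subspace_diff subspace_scale)
    then have "x - c *s s0 \<in> span (insert s0 ?K)" "c *s s0 \<in> span (insert s0 ?K)"
      by (auto intro: span_base span_scale)
    then have "(x - c *s s0) + c *s s0 \<in> span (insert s0 ?K)"
      by (rule span_add)
    then show "x \<in> span (insert s0 ?K)" by simp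
  qed
  then have "dim S \<le> dim (insert s0 ?K)" by (rule dim_mono)
  also have "\<dots> \<le> dim ?K + 1" by (simp add: dim_insert)
  finally show ?thesis .
qed

lemma exists_nonzero_orthogonal_to_finite:
  fixes f :: "'b \<Rightarrow> 'b \<Rightarrow> 'a"
  assumes add: "\<And>x y z. f (x + y) z = f x z + f y z"
    and scale: "\<And>c x y. f (c *s x) y = c * f x y"
    and F: "finite F"
  shows "subspace S \<Longrightarrow> card F < dim S \<Longrightarrow> \<exists>x\<in>S. x \<noteq> 0 \<and> (\<forall>b\<in>F. f x b = 0)"
  using F
proof (induction F arbitrary: S rule: finite_induct)
  case empty
  have "\<not> S \<subseteq> {0}"
  proof
    assume "S \<subseteq> {0}"
    then have "dim S = 0" by simp
    with empty show False by simp
  qed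
  then show ?case by auto
next
  case (insert b F)
  have f_zero: "f 0 z = 0" for z
    using add[of 0 0 z] by (metis add.right_neutral add_left_cancel)
  let ?K = "{x\<in>S. f x b = 0}"
  have "subspace ?K"
    using insert.prems(1) unfolding subspace_def by (auto simp: f_zero add scale)
  moreover have "card F < dim ?K"
    using dim_le_Suc_dim_kernel[of "\<lambda>x. f x b", OF add scale insert.prems(1)] insert by simp
  ultimately obtain x where "x \<in> ?K" "x \<noteq> 0" "\<forall>b\<in>F. f x b = 0"
    using insert.IH by blast
  then show ?case by auto
qed

lemma exists_nonzero_orthogonal_to_proper_subspace:
  fixes f :: "'b \<Rightarrow> 'b \<Rightarrow> 'a"
  assumes add_left: "\<And>x y z. f (x + y) z = f x z + f y z"
    and scale_left: "\<And>c x y. f (c *s x) y = c * f x y"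
    and add_right: "\<And>x y z. f x (y + z) = f x y + f x z"
    and scale_right: "\<And>c x y. f x (c *s y) = c * f x y"
    and W: "subspace W" "W \<noteq> UNIV"
  obtains x where "x \<noteq> 0" "\<And>w. w \<in> W \<Longrightarrow> f x w = 0"
proof -
  obtain C where C: "C \<subseteq> W" "independent C" "W \<subseteq> span C" "card C = dim W"
    using basis_exists by blast
  have "dim W \<noteq> dimension"
    using W dim_eq_full span_eq_iff by metis
  then have "card C < dim (UNIV :: 'b set)"
    using C(4) dim_subset_UNIV[of W] by (simp add: dimension_def)
  then obtain x where x: "x \<noteq> 0" "\<forall>b\<in>C. f x b = 0"
    using exists_nonzero_orthogonal_to_finite[where f=f, OF add_left scale_left
        finiteI_independent[OF C(2)] subspace_UNIV] by auto
  have "f x w = 0" if "w \<in> span C" for w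
    using that
  proof (induction rule: span_induct_alt)
    case base
    show ?case using add_right[of x 0 0] by (metis add.right_neutral add_left_cancel)
  next
    case (step c y z)
    then show ?case using x by (simp add: add_right scale_right)
  qed
  with x C(3) that show ?thesis by blast
qed

end

lemma product_of_degree_pos: "product_of_degree mult n x \<Longrightarrow> 1 \<le> n"
  by (induction rule: product_of_degree.induct) auto

lemma product_of_degree_lower:
  "product_of_degree mult n x \<Longrightarrow> 1 \<le> m \<Longrightarrow> m \<le> n \<Longrightarrow> product_of_degree mult m x"
proof (induction arbitrary: m rule: product_of_degree.induct)
  case (single x)
  then show ?case using product_of_degree.single[of mult x] by simp
next
  case (prod i x j y)
  show ?case
  proof (cases "m = 1")
    case True
    then show ?thesis using product_of_degree.single[of mult "mult x y"] by simp
  next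
    case False
    \<comment> \<open>split \<open>m = i' + (m - i')\<close> with \<open>1 \<le> i' \<le> i\<close> and \<open>1 \<le> m - i' \<le> j\<close>\<close>
    define i' where "i' = min i (m - 1)"
    have "1 \<le> i" "1 \<le> j" using prod.hyps product_of_degree_pos by auto
    then have "product_of_degree mult i' x" "product_of_degree mult (m - i') y"
      using prod False by (auto simp: i'_def)
    then have "product_of_degree mult (i' + (m - i')) (mult x y)"
      by (rule product_of_degree.prod)
    moreover have "i' + (m - i') = m" by (simp add: i'_def)
    ultimately show ?thesis by simp
  qed
qed

lemma product_of_degree_2_iff: "product_of_degree mult 2 z \<longleftrightarrow> (\<exists>x y. z = mult x y)"
proof
  show "product_of_degree mult 2 z \<Longrightarrow> \<exists>x y. z = mult x y"
    by (cases rule: product_of_degree.cases) (auto dest: product_of_degree_pos)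
  show "\<exists>x y. z = mult x y \<Longrightarrow> product_of_degree mult 2 z"
    using product_of_degree.prod[OF product_of_degree.single product_of_degree.single]
    by (metis one_add_one)
qed

locale bilinear_algebra = vector_space scale
  for scale :: "'a::field \<Rightarrow> 'b::ab_group_add \<Rightarrow> 'b" (infixr \<open>*s\<close> 75) +
  fixes mult :: "'b \<Rightarrow> 'b \<Rightarrow> 'b"
  assumes mult_add_left: "mult (x + y) z = mult x z + mult y z"
    and mult_add_right: "mult x (y + z) = mult x y + mult x z"
    and mult_scale_left: "mult (c *s x) y = c *s mult x y"
    and mult_scale_right: "mult x (c *s y) = c *s mult x y"
begin

lemma mult_zero_left [simp]: "mult 0 y = 0"
  using mult_add_left[of 0 0 y] by simp

lemma mult_zero_right [simp]: "mult x 0 = 0"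
  using mult_add_right[of x 0 0] by simp

definition alg_power :: "nat \<Rightarrow> 'b set" where
  "alg_power k = span {x. product_of_degree mult k x}"

lemma subspace_alg_power: "subspace (alg_power k)"
  by (simp add: alg_power_def)

lemma mem_alg_power_1: "x \<in> alg_power 1"
  unfolding alg_power_def by (rule span_base, rule CollectI, rule product_of_degree.single)

lemma alg_power_antimono: "1 \<le> m \<Longrightarrow> m \<le> n \<Longrightarrow> alg_power n \<subseteq> alg_power m"
  unfolding alg_power_def by (intro span_mono) (auto intro: product_of_degree_lower)

lemma alg_power_eq_zero:
  assumes "\<forall>x. product_of_degree mult n x \<longrightarrow> x = 0"
  shows "alg_power n = {0}"
proof -
  have "alg_power n \<subseteq> span {0}"
    unfolding alg_power_def using assms by (intro span_mono) auto
  then show ?thesis using subspace_0[OF subspace_alg_power] by auto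
qed

lemma mult_mem_alg_power:
  assumes "a \<in> alg_power i" "b \<in> alg_power j"
  shows "mult a b \<in> alg_power (i + j)"
proof -
  have mult_left: "mult x b \<in> alg_power (i + j)" if "product_of_degree mult i x" for x
    using assms(2) unfolding alg_power_def
  proof (induction rule: span_induct_alt)
    case (step c y z)
    have "mult x y \<in> span {x. product_of_degree mult (i + j) x}"
      using step that by (auto intro!: span_base product_of_degree.prod)
    with step show ?case by (auto simp: mult_add_right mult_scale_right intro!: span_add span_scale)
  qed (simp add: span_zero)
  show ?thesis
    using assms(1) unfolding alg_power_def
  proof (induction rule: span_induct_alt)
    case (step c y z)
    then show ?case using mult_left
      by (auto simp: mult_add_left mult_scale_left alg_power_def intro!: span_add span_scale)
  qed (simp add: span_zero)
qed

lemma alg_power_2_subset: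
  assumes "subspace W" "\<And>x y. mult x y \<in> W"
  shows "alg_power 2 \<subseteq> W"
  unfolding alg_power_def product_of_degree_2_iff using assms by (intro span_minimal) auto

lemma subset_plus_alg_power: "U \<subseteq> U + alg_power k"
  using set_plus_intro[OF _ subspace_0[OF subspace_alg_power]] by fastforce

lemma mult_mem_plus_alg_power_Suc:
  assumes U: "subalgebra scale mult U" and k: "1 \<le> k"
    and x: "x \<in> U + alg_power k" and y: "y \<in> U + alg_power k"
  shows "mult x y \<in> U + alg_power (Suc k)"
proof -
  obtain u s u' t where us: "u \<in> U" "s \<in> alg_power k" "x = u + s"
    and ut: "u' \<in> U" "t \<in> alg_power k" "y = u' + t"
    using x y by (auto elim!: set_plus_elim)
  have "mult x y = mult u u' + (mult u t + mult s u' + mult s t)"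
    using us ut by (simp add: mult_add_left mult_add_right algebra_simps)
  moreover have "mult u u' \<in> U"
    using U us ut by (simp add: subalgebra_def)
  moreover have "mult u t \<in> alg_power (1 + k)"
    using mem_alg_power_1 ut(2) by (rule mult_mem_alg_power)
  moreover have "mult s u' \<in> alg_power (k + 1)"
    using us(2) mem_alg_power_1 by (rule mult_mem_alg_power)
  moreover have "mult s t \<in> alg_power (Suc k)"
    using mult_mem_alg_power[OF us(2) ut(2)] alg_power_antimono[of "Suc k" "k + k"] k by auto
  ultimately show ?thesis
    using subspace_alg_power by (auto intro!: set_plus_intro subspace_add)
qed

text \<open>A nilpotent analogue of Nakayama's lemma.\<close>

lemma subalgebra_eq_UNIV_if_plus_square_eq_UNIV:
  assumes U: "subalgebra scale mult U" and nil: "nilpotent_alg mult"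
    and cover: "U + alg_power 2 = UNIV"
  shows "U = UNIV"
proof -
  have sU: "subspace U" using U by (simp add: subalgebra_def)
  have "U + alg_power k = UNIV" if "1 \<le> k" for k
    using that
  proof (induction k rule: dec_induct)
    case base
    show ?case
      using set_plus_intro[OF subspace_0[OF sU] mem_alg_power_1] by auto
  next
    case (step k)
    have sW: "subspace (U + alg_power (Suc k))"
      by (rule subspace_set_plus[OF sU subspace_alg_power])
    have "alg_power 2 \<subseteq> U + alg_power (Suc k)"
      using sW mult_mem_plus_alg_power_Suc[OF U step.hyps(1)] step.IH
      by (intro alg_power_2_subset) auto
    moreover note subset_plus_alg_power[of U "Suc k"]
    ultimately have "U + alg_power 2 \<subseteq> U + alg_power (Suc k)"
      using sW by (auto elim!: set_plus_elim intro: subspace_add)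
    then show ?case using cover by auto
  qed
  moreover obtain n where "1 \<le> n" "alg_power n = {0}"
    using nil alg_power_eq_zero unfolding nilpotent_alg_def by blast
  ultimately have "U + {0} = UNIV" by metis
  then show ?thesis using add.right_neutral[of U] by simp
qed

end

locale invariant_form_algebra =
  bilinear_algebra scale mult + finite_dimensional_vector_space scale Basis
  for scale :: "'a::field \<Rightarrow> 'b::ab_group_add \<Rightarrow> 'b" (infixr \<open>*s\<close> 75)
    and Basis :: "'b set" and mult :: "'b \<Rightarrow> 'b \<Rightarrow> 'b" +
  fixes B :: "'b \<Rightarrow> 'b \<Rightarrow> 'a"
  assumes form_add_left: "B (x + y) z = B x z + B y z"
    and form_scale_left: "B (c *s x) y = c * B x y"
    and form_sym: "B x y = B y x"
    and form_nondegenerate: "(\<And>y. B x y = 0) \<Longrightarrow> x = 0"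
    and form_invariant: "B (mult x y) z = B x (mult y z)"
begin

lemma form_add_right: "B x (y + z) = B x y + B x z"
  by (metis form_add_left form_sym)

lemma form_scale_right: "B x (c *s y) = c * B x y"
  by (metis form_scale_left form_sym)

lemma exists_nonzero_orthogonal:
  assumes "subspace W" "W \<noteq> UNIV"
  obtains x where "x \<noteq> 0" "\<And>w. w \<in> W \<Longrightarrow> B x w = 0"
  using exists_nonzero_orthogonal_to_proper_subspace[OF form_add_left form_scale_left
      form_add_right form_scale_right assms] by blast

lemma mem_Ann_if_orthogonal_products:
  assumes "\<And>y z. B x (mult y z) = 0"
  shows "x \<in> Ann mult"
  unfolding Ann_def using assms form_invariant form_nondegenerate by auto

lemma mem_isotropic_summand_if_orthogonal:
  assumes U: "totally_isotropic B U" and V: "totally_isotropic B V"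
    and UV: "direct_sum_decomp U V"
    and x: "\<And>u. u \<in> U \<Longrightarrow> B x u = 0"
  shows "x \<in> U"
proof -
  obtain a b where ab: "a \<in> U" "b \<in> V" "x = a + b"
    using UV unfolding direct_sum_decomp_def by blast
  have "B b y = 0" for y
  proof -
    obtain u v where uv: "u \<in> U" "v \<in> V" "y = u + v"
      using UV unfolding direct_sum_decomp_def by blast
    have "B b u = B x u - B a u" using ab by (simp add: form_add_left)
    also have "\<dots> = 0" using x U ab uv by (simp add: totally_isotropic_def)
    finally show "B b y = 0"
      using V ab uv by (simp add: form_add_right totally_isotropic_def)
  qed
  then have "b = 0" by (rule form_nondegenerate)
  with ab show ?thesis by simp
qed

lemma isotropic_subalgebra_meets_Ann:
  assumes U: "subalgebra scale mult U" "totally_isotropic B U"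
    and V: "totally_isotropic B V" and UV: "direct_sum_decomp U V"
    and nil: "nilpotent_alg mult" and nontrivial: "(UNIV :: 'b set) \<noteq> {0}"
  shows "U \<inter> Ann mult \<noteq> {0}"
proof -
  have sU: "subspace U" using U(1) by (simp add: subalgebra_def)
  have "U \<noteq> UNIV"
  proof
    assume "U = UNIV"
    with U(2) have B_zero: "B x y = 0" for x y by (simp add: totally_isotropic_def)
    have "x = 0" for x :: 'b by (rule form_nondegenerate, rule B_zero)
    with nontrivial show False by auto
  qed
  have "subspace (U + alg_power 2)"
    using sU subspace_alg_power by (rule subspace_set_plus)
  moreover have "U + alg_power 2 \<noteq> UNIV"
    using \<open>U \<noteq> UNIV\<close> subalgebra_eq_UNIV_if_plus_square_eq_UNIV[OF U(1) nil] by blast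
  ultimately obtain x where x: "x \<noteq> 0" "\<And>w. w \<in> U + alg_power 2 \<Longrightarrow> B x w = 0"
    by (rule exists_nonzero_orthogonal) blast
  have "x \<in> U"
    using subset_plus_alg_power x(2) by (intro mem_isotropic_summand_if_orthogonal[OF U(2) V UV]) blast
  moreover have "x \<in> Ann mult"
  proof (rule mem_Ann_if_orthogonal_products)
    fix y z
    have "mult y z \<in> alg_power 2"
      using mult_mem_alg_power[OF mem_alg_power_1 mem_alg_power_1] by (simp only: one_add_one)
    with set_zero_plus2[OF subspace_0[OF sU]] x(2) show "B x (mult y z) = 0" by blast
  qed
  ultimately show ?thesis using x(1) by blast
qed

end

lemma pseudo_euclidean_invariant_form_algebra:
  assumes "pseudo_euclidean scale mult B"
  obtains Basis where "invariant_form_algebra scale Basis mult B"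
proof -
  have fa: "fd_algebra scale mult"
    using assms by (simp add: pseudo_euclidean_def jordan_algebra_def)
  then obtain Basis where "finite_dimensional_vector_space scale Basis"
    by (auto simp: fd_algebra_def)
  moreover have "bilinear_algebra scale mult"
    using fa unfolding fd_algebra_def bilinear_algebra_def bilinear_algebra_axioms_def
    by (elim conjE) (intro conjI; blast)
  moreover have "invariant_form_algebra_axioms scale mult B"
    using assms unfolding pseudo_euclidean_def invariant_form_algebra_axioms_def
    by (elim conjE) (intro conjI; assumption)
  ultimately have "invariant_form_algebra scale Basis mult B"
    by (simp add: invariant_form_algebra_def)
  then show ?thesis by (rule that)
qed

lemma direct_sum_decomp_swap: "direct_sum_decomp U V \<Longrightarrow> direct_sum_decomp V U"
  unfolding direct_sum_decomp_def by (metis Int_commute add.commute)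

lemma jordan_manin_swap: "jordan_manin scale mult B U V \<Longrightarrow> jordan_manin scale mult B V U"
  unfolding jordan_manin_def using direct_sum_decomp_swap by blast

theorem mainTheorem12:
  fixes scale :: "'k::field_char_0 \<Rightarrow> 'v::ab_group_add \<Rightarrow> 'v"
    and mult :: "'v \<Rightarrow> 'v \<Rightarrow> 'v"
    and B :: "'v \<Rightarrow> 'v \<Rightarrow> 'k"
    and U V :: "'v set"
  assumes "jordan_manin scale mult B U V"
    and "(UNIV :: 'v set) \<noteq> {0}"
    and "nilpotent_alg mult"
  shows "U \<inter> Ann mult \<noteq> {0} \<and> V \<inter> Ann mult \<noteq> {0}"
proof -
  have "pseudo_euclidean scale mult B"
    using assms(1) by (simp add: jordan_manin_def)
  then obtain Basis where "invariant_form_algebra scale Basis mult B"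
    by (rule pseudo_euclidean_invariant_form_algebra)
  then interpret invariant_form_algebra scale Basis mult B .
  have meets_Ann: "U' \<inter> Ann mult \<noteq> {0}" if "jordan_manin scale mult B U' V'" for U' V'
  proof -
    from that have "subalgebra scale mult U'" "totally_isotropic B U'" "totally_isotropic B V'"
      "direct_sum_decomp U' V'"
      by (simp_all add: jordan_manin_def)
    then show ?thesis using assms(3,2) by (rule isotropic_subalgebra_meets_Ann)
  qed
  show ?thesis
    using meets_Ann[OF assms(1)] meets_Ann[OF jordan_manin_swap[OF assms(1)]] by blast
qed

end
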